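(* Let $(E_1,E_2)$ be a matched pair of Courant algebroids, both of split signature, with connections $\nabla^{\to}$ ($E_1$-connection on $E_2$) and $\nabla^{\leftarrow}$ ($E_2$-connection on $E_1$), and let $D_1\subset E_1$, $D_2\subset E_2$ be Dirac structures. Then $D_1\oplus D_2$ is a Dirac structure in the matched sum $E_1\oplus E_2$ if and only if $\nabla^{\leftarrow}_\alpha a\in\Gamma(D_1)$ and $\nabla^{\to}_a\alpha\in\Gamma(D_2)$ for all $\alpha\in\Gamma(D_2)$ and $a\in\Gamma(D_1)$.
   Context: A Courant algebroid $(E,\langle\cdot,\cdot\rangle,\rho,\diamond)$: real vector bundle with symmetric nondegenerate fiberwise form, bracket and anchor satisfying (J) $\phi\diamond(\phi_1\diamond\phi_2)=\phi_1\diamond(\phi\diamond\phi_2)+(\phi\diamond\phi_1)\diamond\phi_2$, (L) $\phi\diamond(f\phi')=(\rho(\phi)f)\phi'+f(\phi\diamond\phi')$, (S) $\phi\diamond\phi=\tfrac12 D\langle\phi,\phi\rangle$, (I) $\rho(\phi)\langle\phi',\phi'\rangle=2\langle\phi\diamond\phi',\phi'\rangle$, with $\langle Df,\phi\rangle=\rho(\phi)f$. A Dirac structure in a Courant algebroid of split signature is a maximal isotropic subbundle $D$ with $\Gamma(D)\diamond\Gamma(D)\subset\Gamma(D)$. A matched pair $(E_1,E_2)$: metric-preserving connections $\nabla^{\to}$, $\nabla^{\leftarrow}$ with $\nabla^{\to}_{D_1f}=0$, $\nabla^{\leftarrow}_{D_2f}=0$ such that $E_1\oplus E_2$ with pairing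 $\langle a,b\rangle_1+\langle\alpha,\beta\rangle_2$, anchor $\rho_1(a)+\rho_2(\alpha)$ and bracket $(a\oplus\alpha)\diamond(b\oplus\beta)=(a\diamond_1b+\nabla^{\leftarrow}_\alpha b-\nabla^{\leftarrow}_\beta a+\mho(\alpha,\beta)+\tfrac12D_1\langle\alpha,\beta\rangle_2)\oplus(\alpha\diamond_2\beta+\nabla^{\to}_a\beta-\nabla^{\to}_b\alpha+\Omega(a,b)+\tfrac12D_2\langle a,b\rangle_1)$ is a Courant algebroid (the matched sum), where $\langle\gamma,\Omega(a,b)\rangle_2=\tfrac12(\langle\nabla^{\leftarrow}_\gamma a,b\rangle_1-\langle a,\nabla^{\leftarrow}_\gamma b\rangle_1)$ and $\langle c,\mho(\alpha,\beta)\rangle_1=\tfrac12(\langle\nabla^{\to}_c\alpha,\beta\rangle_2-\langle\alpha,\nabla^{\to}_c\beta\rangle_2)$. *)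

theory Defs
  imports "HOL-Analysis.Analysis"
begin

text \<open>
  The base manifold is a type 'm of points together with an algebra
  Fn of (smooth) real functions on it.  A vector bundle E is given by its set Sec of
  (smooth) sections, maps 'm => 'v into a finite-dimensional ambient space 'v
  (euclidean_space); the fibre over x is the set of values of sections at x.
\<close>

definition sadd :: "('m \<Rightarrow> 'v::real_vector) \<Rightarrow> ('m \<Rightarrow> 'v) \<Rightarrow> ('m \<Rightarrow> 'v)" where
  "sadd s t = (\<lambda>x. s x + t x)"

definition smul :: "('m \<Rightarrow> real) \<Rightarrow> ('m \<Rightarrow> 'v::real_vector) \<Rightarrow> ('m \<Rightarrow> 'v)" where
  "smul f s = (\<lambda>x. f x *\<^sub>R s x)"

definition szero :: "'m \<Rightarrow> 'v::real_vector" where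
  "szero = (\<lambda>x. 0)"

definition fconst :: "real \<Rightarrow> 'm \<Rightarrow> real" where
  "fconst c = (\<lambda>x. c)"

definition pr :: "('m \<Rightarrow> 'v \<Rightarrow> 'v \<Rightarrow> real) \<Rightarrow> ('m \<Rightarrow> 'v) \<Rightarrow> ('m \<Rightarrow> 'v) \<Rightarrow> ('m \<Rightarrow> real)" where
  "pr g s t = (\<lambda>x. g x (s x) (t x))"

definition Fib :: "('m \<Rightarrow> 'v) set \<Rightarrow> 'm \<Rightarrow> 'v set" where
  "Fib Sec x = (\<lambda>s. s x) ` Sec"

definition function_algebra :: "('m \<Rightarrow> real) set \<Rightarrow> bool" where
  "function_algebra Fn \<longleftrightarrow>
     (\<forall>c. fconst c \<in> Fn) \<and>
     (\<forall>f\<in>Fn. \<forall>h\<in>Fn. (\<lambda>x. f x + h x) \<in> Fn \<and> (\<lambda>x. f x * h x) \<in> Fn)"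

definition section_module :: "('m \<Rightarrow> real) set \<Rightarrow> ('m \<Rightarrow> 'v::euclidean_space) set \<Rightarrow> bool" where
  "section_module Fn Sec \<longleftrightarrow>
     szero \<in> Sec \<and>
     (\<forall>s\<in>Sec. \<forall>t\<in>Sec. sadd s t \<in> Sec) \<and>
     (\<forall>f\<in>Fn. \<forall>s\<in>Sec. smul f s \<in> Sec)"

definition fibre_metric ::
  "('m \<Rightarrow> real) set \<Rightarrow> ('m \<Rightarrow> 'v::euclidean_space) set \<Rightarrow> ('m \<Rightarrow> 'v \<Rightarrow> 'v \<Rightarrow> real) \<Rightarrow> bool" where
  "fibre_metric Fn Sec g \<longleftrightarrow>
     (\<forall>s\<in>Sec. \<forall>t\<in>Sec. pr g s t \<in> Fn) \<and>
     (\<forall>x. \<forall>u\<in>Fib Sec x. \<forall>v\<in>Fib Sec x. g x u v = g x v u) \<and>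
     (\<forall>x. \<forall>u\<in>Fib Sec x. \<forall>v\<in>Fib Sec x. \<forall>w\<in>Fib Sec x. \<forall>c::real.
          g x (u + v) w = g x u w + g x v w \<and> g x (c *\<^sub>R u) w = c * g x u w) \<and>
     (\<forall>x. \<forall>u\<in>Fib Sec x. (\<forall>v\<in>Fib Sec x. g x u v = 0) \<longrightarrow> u = 0)"

definition split_signature :: "('m \<Rightarrow> 'v::euclidean_space) set \<Rightarrow> ('m \<Rightarrow> 'v \<Rightarrow> 'v \<Rightarrow> real) \<Rightarrow> bool" where
  "split_signature Sec g \<longleftrightarrow>
     (\<forall>x. \<exists>P N. subspace P \<and> subspace N \<and> P \<subseteq> Fib Sec x \<and> N \<subseteq> Fib Sec x \<and>
        Fib Sec x = {p + n | p n. p \<in> P \<and> n \<in> N} \<and>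
        (\<forall>p\<in>P. p \<noteq> 0 \<longrightarrow> g x p p > 0) \<and>
        (\<forall>n\<in>N. n \<noteq> 0 \<longrightarrow> g x n n < 0) \<and>
        (\<forall>p\<in>P. \<forall>n\<in>N. g x p n = 0) \<and>
        dim P = dim N)"

definition courant_algebroid ::
  "('m \<Rightarrow> real) set \<Rightarrow> ('m \<Rightarrow> 'v::euclidean_space) set \<Rightarrow> ('m \<Rightarrow> 'v \<Rightarrow> 'v \<Rightarrow> real) \<Rightarrow>
   (('m \<Rightarrow> 'v) \<Rightarrow> ('m \<Rightarrow> real) \<Rightarrow> ('m \<Rightarrow> real)) \<Rightarrow>
   (('m \<Rightarrow> 'v) \<Rightarrow> ('m \<Rightarrow> 'v) \<Rightarrow> ('m \<Rightarrow> 'v)) \<Rightarrow>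
   (('m \<Rightarrow> real) \<Rightarrow> ('m \<Rightarrow> 'v)) \<Rightarrow> bool" where
  "courant_algebroid Fn Sec g rho br Dop \<longleftrightarrow>
     function_algebra Fn \<and> section_module Fn Sec \<and> fibre_metric Fn Sec g \<and>
     \<comment> \<open>anchor: a C-linear map from sections to derivations (vector fields)\<close>
     (\<forall>\<phi>\<in>Sec. \<forall>f\<in>Fn. rho \<phi> f \<in> Fn) \<and>
     (\<forall>\<phi>\<in>Sec. \<forall>c. rho \<phi> (fconst c) = fconst 0) \<and>
     (\<forall>\<phi>\<in>Sec. \<forall>f\<in>Fn. \<forall>h\<in>Fn.
        rho \<phi> (\<lambda>x. f x + h x) = (\<lambda>x. rho \<phi> f x + rho \<phi> h x) \<and>
        rho \<phi> (\<lambda>x. f x * h x) = (\<lambda>x. f x * rho \<phi> h x + h x * rho \<phi> f x)) \<and>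
     (\<forall>\<phi>\<in>Sec. \<forall>\<psi>\<in>Sec. \<forall>f\<in>Fn. rho (sadd \<phi> \<psi>) f = (\<lambda>x. rho \<phi> f x + rho \<psi> f x)) \<and>
     (\<forall>\<phi>\<in>Sec. \<forall>h\<in>Fn. \<forall>f\<in>Fn. rho (smul h \<phi>) f = (\<lambda>x. h x * rho \<phi> f x)) \<and>
     \<comment> \<open>bracket: R-bilinear on sections\<close>
     (\<forall>\<phi>\<in>Sec. \<forall>\<psi>\<in>Sec. br \<phi> \<psi> \<in> Sec) \<and>
     (\<forall>\<phi>\<in>Sec. \<forall>\<psi>\<in>Sec. \<forall>\<theta>\<in>Sec.
        br (sadd \<phi> \<psi>) \<theta> = sadd (br \<phi> \<theta>) (br \<psi> \<theta>) \<and>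
        br \<theta> (sadd \<phi> \<psi>) = sadd (br \<theta> \<phi>) (br \<theta> \<psi>)) \<and>
     (\<forall>\<phi>\<in>Sec. \<forall>\<psi>\<in>Sec. \<forall>c.
        br (smul (fconst c) \<phi>) \<psi> = smul (fconst c) (br \<phi> \<psi>) \<and>
        br \<phi> (smul (fconst c) \<psi>) = smul (fconst c) (br \<phi> \<psi>)) \<and>
     \<comment> \<open>the operator D\<close>
     (\<forall>f\<in>Fn. Dop f \<in> Sec \<and> (\<forall>\<phi>\<in>Sec. pr g (Dop f) \<phi> = rho \<phi> f)) \<and>
     \<comment> \<open>(J)\<close>
     (\<forall>\<phi>\<in>Sec. \<forall>\<phi>1\<in>Sec. \<forall>\<phi>2\<in>Sec.
        br \<phi> (br \<phi>1 \<phi>2) = sadd (br \<phi>1 (br \<phi> \<phi>2)) (br (br \<phi> \<phi>1) \<phi>2)) \<and>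
     \<comment> \<open>(L)\<close>
     (\<forall>\<phi>\<in>Sec. \<forall>\<phi>'\<in>Sec. \<forall>f\<in>Fn.
        br \<phi> (smul f \<phi>') = sadd (smul (rho \<phi> f) \<phi>') (smul f (br \<phi> \<phi>'))) \<and>
     \<comment> \<open>(S)\<close>
     (\<forall>\<phi>\<in>Sec. br \<phi> \<phi> = smul (fconst (1/2)) (Dop (pr g \<phi> \<phi>))) \<and>
     \<comment> \<open>(I)\<close>
     (\<forall>\<phi>\<in>Sec. \<forall>\<phi>'\<in>Sec.
        rho \<phi> (pr g \<phi>' \<phi>') = (\<lambda>x. 2 * pr g (br \<phi> \<phi>') \<phi>' x))"

definition Gam :: "('m \<Rightarrow> 'v) set \<Rightarrow> ('m \<Rightarrow> 'v set) \<Rightarrow> ('m \<Rightarrow> 'v) set" where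
  "Gam Sec D = {s \<in> Sec. \<forall>x. s x \<in> D x}"

definition isotropic_at :: "('m \<Rightarrow> 'v \<Rightarrow> 'v \<Rightarrow> real) \<Rightarrow> 'm \<Rightarrow> 'v set \<Rightarrow> bool" where
  "isotropic_at g x W \<longleftrightarrow> (\<forall>u\<in>W. \<forall>v\<in>W. g x u v = 0)"

definition dirac_structure ::
  "('m \<Rightarrow> 'v::euclidean_space) set \<Rightarrow> ('m \<Rightarrow> 'v \<Rightarrow> 'v \<Rightarrow> real) \<Rightarrow>
   (('m \<Rightarrow> 'v) \<Rightarrow> ('m \<Rightarrow> 'v) \<Rightarrow> ('m \<Rightarrow> 'v)) \<Rightarrow> ('m \<Rightarrow> 'v set) \<Rightarrow> bool" where
  "dirac_structure Sec g br D \<longleftrightarrow>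
     (\<forall>x. subspace (D x) \<and> D x \<subseteq> Fib Sec x) \<and>
     (\<forall>x. \<forall>v\<in>D x. \<exists>s\<in>Gam Sec D. s x = v) \<and>
     (\<forall>x. isotropic_at g x (D x) \<and>
          (\<forall>W. subspace W \<and> D x \<subseteq> W \<and> W \<subseteq> Fib Sec x \<and> isotropic_at g x W \<longrightarrow> W = D x)) \<and>
     (\<forall>s\<in>Gam Sec D. \<forall>t\<in>Gam Sec D. br s t \<in> Gam Sec D)"

definition metric_connection ::
  "('m \<Rightarrow> real) set \<Rightarrow> ('m \<Rightarrow> 'v::euclidean_space) set \<Rightarrow>
   (('m \<Rightarrow> 'v) \<Rightarrow> ('m \<Rightarrow> real) \<Rightarrow> ('m \<Rightarrow> real)) \<Rightarrow> (('m \<Rightarrow> real) \<Rightarrow> ('m \<Rightarrow> 'v)) \<Rightarrow>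
   ('m \<Rightarrow> 'w::euclidean_space) set \<Rightarrow> ('m \<Rightarrow> 'w \<Rightarrow> 'w \<Rightarrow> real) \<Rightarrow>
   (('m \<Rightarrow> 'v) \<Rightarrow> ('m \<Rightarrow> 'w) \<Rightarrow> ('m \<Rightarrow> 'w)) \<Rightarrow> bool" where
  "metric_connection Fn Sec1 rho1 Dop1 Sec2 g2 nab \<longleftrightarrow>
     (\<forall>a\<in>Sec1. \<forall>\<alpha>\<in>Sec2. nab a \<alpha> \<in> Sec2) \<and>
     (\<forall>a\<in>Sec1. \<forall>b\<in>Sec1. \<forall>\<alpha>\<in>Sec2. nab (sadd a b) \<alpha> = sadd (nab a \<alpha>) (nab b \<alpha>)) \<and>
     (\<forall>a\<in>Sec1. \<forall>f\<in>Fn. \<forall>\<alpha>\<in>Sec2. nab (smul f a) \<alpha> = smul f (nab a \<alpha>)) \<and>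
     (\<forall>a\<in>Sec1. \<forall>\<alpha>\<in>Sec2. \<forall>\<beta>\<in>Sec2. nab a (sadd \<alpha> \<beta>) = sadd (nab a \<alpha>) (nab a \<beta>)) \<and>
     (\<forall>a\<in>Sec1. \<forall>f\<in>Fn. \<forall>\<alpha>\<in>Sec2.
        nab a (smul f \<alpha>) = sadd (smul (rho1 a f) \<alpha>) (smul f (nab a \<alpha>))) \<and>
     (\<forall>a\<in>Sec1. \<forall>\<alpha>\<in>Sec2. \<forall>\<beta>\<in>Sec2.
        rho1 a (pr g2 \<alpha> \<beta>) = (\<lambda>x. pr g2 (nab a \<alpha>) \<beta> x + pr g2 \<alpha> (nab a \<beta>) x)) \<and>
     (\<forall>f\<in>Fn. \<forall>\<alpha>\<in>Sec2. nab (Dop1 f) \<alpha> = szero)"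

definition curv_form ::
  "('m \<Rightarrow> 'v::euclidean_space) set \<Rightarrow> ('m \<Rightarrow> 'v \<Rightarrow> 'v \<Rightarrow> real) \<Rightarrow>
   ('m \<Rightarrow> 'w::euclidean_space) set \<Rightarrow> ('m \<Rightarrow> 'w \<Rightarrow> 'w \<Rightarrow> real) \<Rightarrow>
   (('m \<Rightarrow> 'w) \<Rightarrow> ('m \<Rightarrow> 'v) \<Rightarrow> ('m \<Rightarrow> 'v)) \<Rightarrow>
   (('m \<Rightarrow> 'v) \<Rightarrow> ('m \<Rightarrow> 'v) \<Rightarrow> ('m \<Rightarrow> 'w)) \<Rightarrow> bool" where
  "curv_form Sec1 g1 Sec2 g2 nabL Om \<longleftrightarrow>
     (\<forall>a\<in>Sec1. \<forall>b\<in>Sec1. Om a b \<in> Sec2 \<and>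
        (\<forall>\<gamma>\<in>Sec2. pr g2 \<gamma> (Om a b) =
           (\<lambda>x. (1/2) * (pr g1 (nabL \<gamma> a) b x - pr g1 a (nabL \<gamma> b) x))))"

definition sfst :: "('m \<Rightarrow> 'v \<times> 'w) \<Rightarrow> ('m \<Rightarrow> 'v)" where
  "sfst s = (\<lambda>x. fst (s x))"
definition ssnd :: "('m \<Rightarrow> 'v \<times> 'w) \<Rightarrow> ('m \<Rightarrow> 'w)" where
  "ssnd s = (\<lambda>x. snd (s x))"

definition msum_sec :: "('m \<Rightarrow> 'v) set \<Rightarrow> ('m \<Rightarrow> 'w) set \<Rightarrow> ('m \<Rightarrow> 'v \<times> 'w) set" where
  "msum_sec Sec1 Sec2 = {s. sfst s \<in> Sec1 \<and> ssnd s \<in> Sec2}"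

definition msum_g :: "('m \<Rightarrow> 'v \<Rightarrow> 'v \<Rightarrow> real) \<Rightarrow> ('m \<Rightarrow> 'w \<Rightarrow> 'w \<Rightarrow> real) \<Rightarrow>
    'm \<Rightarrow> 'v \<times> 'w \<Rightarrow> 'v \<times> 'w \<Rightarrow> real" where
  "msum_g g1 g2 x u w = g1 x (fst u) (fst w) + g2 x (snd u) (snd w)"

definition msum_rho ::
  "(('m \<Rightarrow> 'v) \<Rightarrow> ('m \<Rightarrow> real) \<Rightarrow> ('m \<Rightarrow> real)) \<Rightarrow> (('m \<Rightarrow> 'w) \<Rightarrow> ('m \<Rightarrow> real) \<Rightarrow> ('m \<Rightarrow> real)) \<Rightarrow>
   ('m \<Rightarrow> 'v \<times> 'w) \<Rightarrow> ('m \<Rightarrow> real) \<Rightarrow> ('m \<Rightarrow> real)" where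
  "msum_rho rho1 rho2 s f = (\<lambda>x. rho1 (sfst s) f x + rho2 (ssnd s) f x)"

definition msum_D ::
  "(('m \<Rightarrow> real) \<Rightarrow> ('m \<Rightarrow> 'v)) \<Rightarrow> (('m \<Rightarrow> real) \<Rightarrow> ('m \<Rightarrow> 'w)) \<Rightarrow> ('m \<Rightarrow> real) \<Rightarrow> ('m \<Rightarrow> 'v \<times> 'w)" where
  "msum_D Dop1 Dop2 f = (\<lambda>x. (Dop1 f x, Dop2 f x))"

definition msum_br ::
  "('m \<Rightarrow> 'v::real_vector \<Rightarrow> 'v \<Rightarrow> real) \<Rightarrow> (('m \<Rightarrow> 'v) \<Rightarrow> ('m \<Rightarrow> 'v) \<Rightarrow> ('m \<Rightarrow> 'v)) \<Rightarrow>
   (('m \<Rightarrow> real) \<Rightarrow> ('m \<Rightarrow> 'v)) \<Rightarrow>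
   ('m \<Rightarrow> 'w::real_vector \<Rightarrow> 'w \<Rightarrow> real) \<Rightarrow> (('m \<Rightarrow> 'w) \<Rightarrow> ('m \<Rightarrow> 'w) \<Rightarrow> ('m \<Rightarrow> 'w)) \<Rightarrow>
   (('m \<Rightarrow> real) \<Rightarrow> ('m \<Rightarrow> 'w)) \<Rightarrow>
   (('m \<Rightarrow> 'v) \<Rightarrow> ('m \<Rightarrow> 'w) \<Rightarrow> ('m \<Rightarrow> 'w)) \<Rightarrow>
   (('m \<Rightarrow> 'w) \<Rightarrow> ('m \<Rightarrow> 'v) \<Rightarrow> ('m \<Rightarrow> 'v)) \<Rightarrow>
   (('m \<Rightarrow> 'v) \<Rightarrow> ('m \<Rightarrow> 'v) \<Rightarrow> ('m \<Rightarrow> 'w)) \<Rightarrow>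
   (('m \<Rightarrow> 'w) \<Rightarrow> ('m \<Rightarrow> 'w) \<Rightarrow> ('m \<Rightarrow> 'v)) \<Rightarrow>
   ('m \<Rightarrow> 'v \<times> 'w) \<Rightarrow> ('m \<Rightarrow> 'v \<times> 'w) \<Rightarrow> ('m \<Rightarrow> 'v \<times> 'w)" where
  "msum_br g1 br1 Dop1 g2 br2 Dop2 nabR nabL Om Mh s t =
     (let a = sfst s; \<alpha> = ssnd s; b = sfst t; \<beta> = ssnd t in
      (\<lambda>x. (br1 a b x + nabL \<alpha> b x - nabL \<beta> a x + Mh \<alpha> \<beta> x
               + (1/2) *\<^sub>R Dop1 (pr g2 \<alpha> \<beta>) x,
             br2 \<alpha> \<beta> x + nabR a \<beta> x - nabR b \<alpha> x + Om a b x
               + (1/2) *\<^sub>R Dop2 (pr g1 a b) x)))"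

definition matched_pair where
  "matched_pair Fn Sec1 g1 rho1 br1 Dop1 Sec2 g2 rho2 br2 Dop2 nabR nabL Om Mh \<longleftrightarrow>
     courant_algebroid Fn Sec1 g1 rho1 br1 Dop1 \<and>
     courant_algebroid Fn Sec2 g2 rho2 br2 Dop2 \<and>
     metric_connection Fn Sec1 rho1 Dop1 Sec2 g2 nabR \<and>
     metric_connection Fn Sec2 rho2 Dop2 Sec1 g1 nabL \<and>
     curv_form Sec1 g1 Sec2 g2 nabL Om \<and>
     curv_form Sec2 g2 Sec1 g1 nabR Mh \<and>
     courant_algebroid Fn (msum_sec Sec1 Sec2) (msum_g g1 g2) (msum_rho rho1 rho2)
        (msum_br g1 br1 Dop1 g2 br2 Dop2 nabR nabL Om Mh) (msum_D Dop1 Dop2)"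

end

theory Submission
  imports Defs
begin

text \<open>
  The bracket of the matched sum evaluated on the mixed pair (a,0), (0,alpha)
  is (-nabL alpha a, nabR a alpha); hence closedness of D1 (+) D2 under the bracket forces
  both connections to preserve the Dirac structures.  Conversely, assume the connections
  preserve D1 and D2.  The product D1 x D2 is always a Lagrangian subbundle of the sum
  (isotropy is immediate, maximality reduces componentwise to maximality of D1 and D2);
  the only non-obvious summands of the bracket of two sections of D1 (+) D2 are Omega and
  Mho, and their pairing with D2 (resp. D1) vanishes by the defining formula, so they lie
  in D2 (resp. D1).  Both steps rely on one piece of linear algebra: in a space carrying a
  symmetric bilinear form of split signature, a maximal isotropic subspace coincides with
  its orthogonal.
\<close>

subsection \<open>Symmetric bilinear forms of split signature\<close>

definition linear_functional_on :: "'v::real_vector set \<Rightarrow> ('v \<Rightarrow> real) \<Rightarrow> bool" where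
  "linear_functional_on N f \<longleftrightarrow>
     (\<forall>u\<in>N. \<forall>v\<in>N. f (u + v) = f u + f v) \<and> (\<forall>u\<in>N. \<forall>c. f (c *\<^sub>R u) = c * f u)"

definition sym_bilinear_on :: "'v::real_vector set \<Rightarrow> ('v \<Rightarrow> 'v \<Rightarrow> real) \<Rightarrow> bool" where
  "sym_bilinear_on F G \<longleftrightarrow> (\<forall>u\<in>F. \<forall>v\<in>F. G u v = G v u) \<and>
     (\<forall>u\<in>F. \<forall>v\<in>F. \<forall>w\<in>F. \<forall>c. G (u + v) w = G u w + G v w \<and> G (c *\<^sub>R u) w = c * G u w)"

text \<open>Elementary rules; the right-slot versions use symmetry, hence need F to be a subspace.\<close>
lemma sym_bilinear_on_sym: "sym_bilinear_on F G \<Longrightarrow> u \<in> F \<Longrightarrow> v \<in> F \<Longrightarrow> G u v = G v u"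
  unfolding sym_bilinear_on_def by simp

lemma sym_bilinear_on_add_left:
  "sym_bilinear_on F G \<Longrightarrow> u \<in> F \<Longrightarrow> v \<in> F \<Longrightarrow> w \<in> F \<Longrightarrow> G (u + v) w = G u w + G v w"
  unfolding sym_bilinear_on_def by simp

lemma sym_bilinear_on_scale_left:
  "sym_bilinear_on F G \<Longrightarrow> u \<in> F \<Longrightarrow> w \<in> F \<Longrightarrow> G (c *\<^sub>R u) w = c * G u w"
  unfolding sym_bilinear_on_def by simp

lemma sym_bilinear_on_add_right:
  assumes bl: "sym_bilinear_on F G" and F: "subspace F" and uvw: "u \<in> F" "v \<in> F" "w \<in> F"
  shows "G w (u + v) = G w u + G w v"
proof -
  have "G w (u + v) = G (u + v) w"
    using sym_bilinear_on_sym[OF bl uvw(3) subspace_add[OF F uvw(1,2)]] .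
  also have "\<dots> = G u w + G v w" using sym_bilinear_on_add_left[OF bl uvw] .
  finally show ?thesis
    using sym_bilinear_on_sym[OF bl uvw(1,3)] sym_bilinear_on_sym[OF bl uvw(2,3)] by simp
qed

lemma sym_bilinear_on_scale_right:
  assumes bl: "sym_bilinear_on F G" and F: "subspace F" and uw: "u \<in> F" "w \<in> F"
  shows "G w (c *\<^sub>R u) = c * G w u"
  using sym_bilinear_on_sym[OF bl uw(2) subspace_scale[OF F uw(1)]]
    sym_bilinear_on_scale_left[OF bl uw] sym_bilinear_on_sym[OF bl uw] by simp

lemma sym_bilinear_on_zero_left: "sym_bilinear_on F G \<Longrightarrow> 0 \<in> F \<Longrightarrow> w \<in> F \<Longrightarrow> G 0 w = 0"
  using sym_bilinear_on_scale_left[of F G 0 w 0] by simp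

lemma sym_bilinear_on_zero_right: "sym_bilinear_on F G \<Longrightarrow> 0 \<in> F \<Longrightarrow> w \<in> F \<Longrightarrow> G w 0 = 0"
  using sym_bilinear_on_zero_left[of F G w] sym_bilinear_on_sym[of F G w 0] by simp

lemma sym_bilinear_on_neg: "sym_bilinear_on F G \<Longrightarrow> sym_bilinear_on F (\<lambda>u v. - G u v)"
  unfolding sym_bilinear_on_def by auto

lemma linear_functional_on_add: "linear_functional_on N f \<Longrightarrow> u \<in> N \<Longrightarrow> v \<in> N \<Longrightarrow> f (u + v) = f u + f v"
  unfolding linear_functional_on_def by simp

lemma linear_functional_on_scale: "linear_functional_on N f \<Longrightarrow> u \<in> N \<Longrightarrow> f (c *\<^sub>R u) = c * f u"
  unfolding linear_functional_on_def by simp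

lemma linear_functional_on_zero: "linear_functional_on N f \<Longrightarrow> subspace N \<Longrightarrow> f 0 = 0"
  using linear_functional_on_scale[of N f 0 0] subspace_0[of N] by simp

lemma linear_functional_on_mono: "linear_functional_on N f \<Longrightarrow> M \<subseteq> N \<Longrightarrow> linear_functional_on M f"
  unfolding linear_functional_on_def by blast

lemma sym_bilinear_on_functional_left:
  "sym_bilinear_on F G \<Longrightarrow> w \<in> F \<Longrightarrow> linear_functional_on F (\<lambda>u. G u w)"
  unfolding linear_functional_on_def by (simp add: sym_bilinear_on_add_left sym_bilinear_on_scale_left)

lemma sym_bilinear_on_functional:
  "sym_bilinear_on F G \<Longrightarrow> subspace F \<Longrightarrow> l \<in> F \<Longrightarrow> linear_functional_on F (G l)"
  unfolding linear_functional_on_def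
  by (simp add: sym_bilinear_on_add_right sym_bilinear_on_scale_right)

lemma kernel_subspace:
  assumes N: "subspace N" and f: "linear_functional_on N f"
  shows "subspace {n\<in>N. f n = 0}"
  unfolding subspace_def
  using linear_functional_on_zero[OF f N] N
  by (simp add: subspace_0 subspace_add subspace_scale linear_functional_on_add[OF f]
      linear_functional_on_scale[OF f])

lemma kernel_codim_le_one:
  fixes N :: "'v::euclidean_space set"
  assumes N: "subspace N" and f: "linear_functional_on N f"
  shows "dim N \<le> dim {n\<in>N. f n = 0} + 1"
proof (cases "\<forall>n\<in>N. f n = 0")
  case True
  then have "{n\<in>N. f n = 0} = N" by auto
  then show ?thesis by simp
next
  case False
  then obtain n0 where n0: "n0 \<in> N" "f n0 \<noteq> 0" by auto
  have "N \<subseteq> span (insert n0 {n\<in>N. f n = 0})"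
  proof
    fix n assume n: "n \<in> N"
    define k where "k = f n / f n0"
    have kn0: "(-k) *\<^sub>R n0 \<in> N" using subspace_scale[OF N n0(1)] .
    have "f (n + (-k) *\<^sub>R n0) = f n + (-k) * f n0"
      using linear_functional_on_add[OF f n kn0] linear_functional_on_scale[OF f n0(1), of "-k"]
      by (simp only:)
    also have "\<dots> = 0" using n0(2) by (simp add: k_def)
    finally have "f (n - k *\<^sub>R n0) = 0" by simp
    moreover have "n - k *\<^sub>R n0 \<in> N" using subspace_diff[OF N n subspace_scale[OF N n0(1)]] .
    ultimately have "n - k *\<^sub>R n0 \<in> span {n\<in>N. f n = 0}" by (simp add: span_base)
    then show "n \<in> span (insert n0 {n\<in>N. f n = 0})"
      unfolding span_breakdown_eq by blast
  qed
  then have "dim N \<le> dim (span (insert n0 {n\<in>N. f n = 0}))" by (rule dim_subset)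
  also have "\<dots> = dim (insert n0 {n\<in>N. f n = 0})" by (rule dim_span)
  also have "\<dots> \<le> dim {n\<in>N. f n = 0} + 1" by (simp add: dim_insert)
  finally show ?thesis .
qed

lemma common_zero_of_functionals:
  fixes N :: "'v::euclidean_space set" and f :: "'l \<Rightarrow> 'v \<Rightarrow> real"
  assumes "finite B" "subspace N" "card B < dim N" "\<forall>l\<in>B. linear_functional_on N (f l)"
  shows "\<exists>n\<in>N. n \<noteq> 0 \<and> (\<forall>l\<in>B. f l n = 0)"
  using assms
proof (induction B arbitrary: N rule: finite_induct)
  case empty
  then have "\<not> N \<subseteq> {0}" using dim_eq_0 by (metis less_numeral_extra(3) card.empty)
  then show ?case by auto
next
  case (insert l B)
  define N' where "N' = {n\<in>N. f l n = 0}"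
  have lin: "linear_functional_on N (f l)" using insert.prems(3) by simp
  have "card B < dim N'"
    using kernel_codim_le_one[OF insert.prems(1) lin] insert.prems(2) insert.hyps
    unfolding N'_def by simp
  moreover have "\<forall>l\<in>B. linear_functional_on N' (f l)"
    using insert.prems(3) linear_functional_on_mono[of N _ N'] unfolding N'_def by blast
  ultimately obtain n where "n \<in> N'" "n \<noteq> 0" "\<forall>l\<in>B. f l n = 0"
    using insert.IH kernel_subspace[OF insert.prems(1) lin] unfolding N'_def by blast
  then show ?case unfolding N'_def by auto
qed

lemma exists_nonzero_orthogonal:
  fixes G :: "'v::euclidean_space \<Rightarrow> 'v \<Rightarrow> real"
  assumes F: "subspace F" and bl: "sym_bilinear_on F G"
    and L: "L \<subseteq> F" and N: "subspace N" "N \<subseteq> F" and lt: "dim L < dim N"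
  shows "\<exists>n\<in>N. n \<noteq> 0 \<and> (\<forall>l\<in>L. G l n = 0)"
proof -
  obtain B where B: "B \<subseteq> L" "independent B" "L \<subseteq> span B" "card B = dim L"
    by (rule basis_exists)
  have "\<forall>l\<in>B. linear_functional_on N (G l)"
  proof
    fix l assume "l \<in> B"
    then have "l \<in> F" using B(1) L by blast
    then show "linear_functional_on N (G l)"
      using linear_functional_on_mono[OF sym_bilinear_on_functional[OF bl F] N(2)] by blast
  qed
  moreover have "card B < dim N" using B(4) lt by simp
  ultimately obtain n where n: "n \<in> N" "n \<noteq> 0" and nB: "\<forall>l\<in>B. G l n = 0"
    using common_zero_of_functionals[OF finiteI_independent[OF B(2)] N(1), of G] by blast
  have nF: "n \<in> F" using n(1) N(2) by blast
  have "subspace {l \<in> F. G l n = 0}"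
    using kernel_subspace[OF F sym_bilinear_on_functional_left[OF bl nF]] .
  moreover have "B \<subseteq> {l \<in> F. G l n = 0}" using B(1) L nB by blast
  ultimately have "span B \<subseteq> {l \<in> F. G l n = 0}" by (rule span_minimal[rotated])
  then show ?thesis using B(3) n by blast
qed

lemma isotropic_extend:
  fixes G :: "'v::euclidean_space \<Rightarrow> 'v \<Rightarrow> real"
  assumes F: "subspace F" and bl: "sym_bilinear_on F G"
    and L: "subspace L" "L \<subseteq> F" "\<forall>a\<in>L. \<forall>b\<in>L. G a b = 0"
    and w: "w \<in> F" "\<forall>l\<in>L. G l w = 0" "G w w = 0"
  shows "\<forall>a\<in>span (insert w L). \<forall>b\<in>span (insert w L). G a b = 0"
proof (intro ballI)
  fix a b assume a: "a \<in> span (insert w L)" and b: "b \<in> span (insert w L)"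
  obtain k1 where k1: "a - k1 *\<^sub>R w \<in> L" using a span_breakdown_eq L(1) by (metis span_eq_iff)
  obtain k2 where k2: "b - k2 *\<^sub>R w \<in> L" using b span_breakdown_eq L(1) by (metis span_eq_iff)
  define l1 where "l1 = a - k1 *\<^sub>R w"
  define l2 where "l2 = b - k2 *\<^sub>R w"
  have l1F: "l1 \<in> F" and l2F: "l2 \<in> F" using k1 k2 L(2) l1_def l2_def by auto
  have kw1: "k1 *\<^sub>R w \<in> F" and kw2: "k2 *\<^sub>R w \<in> F" using w F by (auto simp: subspace_scale)
  have ae: "a = l1 + k1 *\<^sub>R w" and be: "b = l2 + k2 *\<^sub>R w" by (simp_all add: l1_def l2_def)
  have "G a b = G l1 l2 + G l1 (k2 *\<^sub>R w) + (G (k1 *\<^sub>R w) l2 + G (k1 *\<^sub>R w) (k2 *\<^sub>R w))"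
    unfolding ae be using bl F l1F l2F kw1 kw2
    by (simp add: sym_bilinear_on_add_left sym_bilinear_on_add_right subspace_add)
  also have "\<dots> = 0"
    using bl F l1F l2F w k1 k2 L
    by (simp add: sym_bilinear_on_scale_left sym_bilinear_on_scale_right subspace_scale
        l1_def[symmetric] l2_def[symmetric] sym_bilinear_on_sym[of F G w l2])
  finally show "G a b = 0" .
qed

lemma maximal_isotropic_absorbs:
  fixes G :: "'v::euclidean_space \<Rightarrow> 'v \<Rightarrow> real"
  assumes F: "subspace F" and bl: "sym_bilinear_on F G"
    and L: "subspace L" "L \<subseteq> F" "\<forall>a\<in>L. \<forall>b\<in>L. G a b = 0"
    and max: "\<forall>W. subspace W \<and> L \<subseteq> W \<and> W \<subseteq> F \<and> (\<forall>a\<in>W. \<forall>b\<in>W. G a b = 0) \<longrightarrow> W = L"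
    and w: "w \<in> F" "\<forall>l\<in>L. G l w = 0" "G w w = 0"
  shows "w \<in> L"
proof -
  have "span (insert w L) \<subseteq> F" using w L F by (metis insert_subset span_eq_iff span_mono)
  moreover have "L \<subseteq> span (insert w L)" by (meson span_superset subset_insertI subset_trans)
  ultimately have "span (insert w L) = L" using max isotropic_extend[OF F bl L w] subspace_span by blast
  then show ?thesis by (metis insertI1 span_superset subsetD)
qed

lemma quadratic_has_root:
  fixes a b c :: real assumes "a > 0" "c < 0"
  shows "\<exists>t. a + 2*b*t + c*t^2 = 0"
proof -
  define d where "d = sqrt (b^2 - a*c)"
  have "b^2 - a*c \<ge> 0" using assms by (smt (verit) mult_pos_neg zero_le_power2)
  then have dd: "d^2 = b^2 - a*c" using d_def by simp
  define t where "t = (-b - d)/c"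
  have "c * (a + 2*b*t + c*t^2) = c*a + 2*b*(-b-d) + (b+d)^2"
    using assms by (simp add: t_def power2_eq_square field_simps)
  also have "\<dots> = c*a - b^2 + d^2" by (simp add: power2_eq_square algebra_simps)
  also have "\<dots> = 0" using dd by simp
  finally show ?thesis using assms by auto
qed

lemma isotropic_dim_lt_negative:
  fixes G :: "'v::euclidean_space \<Rightarrow> 'v \<Rightarrow> real"
  assumes F: "subspace F" and bl: "sym_bilinear_on F G"
    and P: "subspace P" and N: "subspace N" "N \<subseteq> F"
    and FPN: "F = {p + n |p n. p \<in> P \<and> n \<in> N}"
    and negN: "\<forall>n\<in>N. n \<noteq> 0 \<longrightarrow> G n n < 0" and dimPN: "dim P = dim N"
    and L: "subspace L" "L \<subseteq> F" "\<forall>a\<in>L. \<forall>b\<in>L. G a b = 0"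
    and u: "u \<in> F" "\<forall>l\<in>L. G l u = 0" "G u u > 0"
  shows "dim L < dim N"
proof -
  have uL: "u \<notin> L" using u L by force
  define M where "M = span (insert u L)"
  have MF: "M \<subseteq> F" unfolding M_def using u L F by (metis insert_subset span_eq_iff span_mono)
  have dimM: "dim M = dim L + 1"
    unfolding M_def using uL L(1) by (simp add: dim_insert span_eq_iff[THEN iffD2])
  have "M \<inter> N \<subseteq> {0}"
  proof
    fix m assume m: "m \<in> M \<inter> N"
    obtain k where k: "m - k *\<^sub>R u \<in> L" using m span_breakdown_eq L(1) unfolding M_def
      by (metis IntD1 span_eq_iff)
    define l where "l = m - k *\<^sub>R u"
    have lF: "l \<in> F" using k L l_def by auto
    have kuF: "k *\<^sub>R u \<in> F" using u F by (simp add: subspace_scale)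
    have me: "m = l + k *\<^sub>R u" by (simp add: l_def)
    have "G m m = G l l + G l (k *\<^sub>R u) + (G (k *\<^sub>R u) l + G (k *\<^sub>R u) (k *\<^sub>R u))"
      unfolding me using bl F lF kuF
      by (simp add: sym_bilinear_on_add_left sym_bilinear_on_add_right subspace_add)
    also have "\<dots> = k * (k * G u u)"
      using bl F lF u k L by (simp add: sym_bilinear_on_scale_left sym_bilinear_on_scale_right
          subspace_scale l_def[symmetric] sym_bilinear_on_sym[of F G u l])
    finally have "G m m \<ge> 0" using u(3) by (simp add: mult.assoc[symmetric])
    then show "m \<in> {0}" using negN m by force
  qed
  then have "dim (M \<inter> N) = 0" by simp
  moreover have "{x + y |x y. x \<in> M \<and> y \<in> N} \<subseteq> F" using MF N F subspace_add by blast
  then have "dim {x + y |x y. x \<in> M \<and> y \<in> N} \<le> dim F" by (rule dim_subset)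
  moreover have "dim F + dim (P \<inter> N) = dim P + dim N" using dim_sums_Int[OF P N(1)] FPN by simp
  ultimately show ?thesis using dim_sums_Int[OF subspace_span N(1), of "insert u L"] dimM dimPN
    unfolding M_def by linarith
qed

text \<open>A maximal isotropic subspace admits no orthogonal vector of positive length: otherwise
  a suitable combination with a negative vector orthogonal to L would enlarge L.\<close>
lemma maximal_isotropic_no_positive_orthogonal:
  fixes G :: "'v::euclidean_space \<Rightarrow> 'v \<Rightarrow> real"
  assumes F: "subspace F" and bl: "sym_bilinear_on F G"
    and P: "subspace P" and N: "subspace N" "N \<subseteq> F"
    and FPN: "F = {p + n |p n. p \<in> P \<and> n \<in> N}"
    and negN: "\<forall>n\<in>N. n \<noteq> 0 \<longrightarrow> G n n < 0" and dimPN: "dim P = dim N"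
    and L: "subspace L" "L \<subseteq> F" "\<forall>a\<in>L. \<forall>b\<in>L. G a b = 0"
    and max: "\<forall>W. subspace W \<and> L \<subseteq> W \<and> W \<subseteq> F \<and> (\<forall>a\<in>W. \<forall>b\<in>W. G a b = 0) \<longrightarrow> W = L"
    and u: "u \<in> F" "\<forall>l\<in>L. G l u = 0" "G u u > 0"
  shows False
proof -
  have "dim L < dim N"
    using isotropic_dim_lt_negative[OF F bl P N FPN negN dimPN L u] .
  then obtain n where n: "n \<in> N" "n \<noteq> 0" and nperp: "\<forall>l\<in>L. G l n = 0"
    using exists_nonzero_orthogonal[OF F bl L(2) N] by blast
  have nF: "n \<in> F" using n N by auto
  have gnn: "G n n < 0" using negN n by auto
  obtain t where t: "G u u + 2 * G u n * t + G n n * t^2 = 0"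
    using quadratic_has_root[OF u(3) gnn] by blast
  define w where "w = u + t *\<^sub>R n"
  have tnF: "t *\<^sub>R n \<in> F" using nF F by (simp add: subspace_scale)
  have wF: "w \<in> F" unfolding w_def using u tnF F by (simp add: subspace_add)
  have wperp: "\<forall>l\<in>L. G l w = 0"
    using u nperp bl F L nF tnF by (auto simp: w_def sym_bilinear_on_add_right sym_bilinear_on_scale_right)
  have Gnu: "G n u = G u n" using bl u nF by (simp add: sym_bilinear_on_sym)
  have "G w w = G u u + t * G n u + (t * G u n + t * (t * G n n))"
    unfolding w_def using bl F u nF tnF
    by (simp add: sym_bilinear_on_add_left sym_bilinear_on_add_right sym_bilinear_on_scale_left
        sym_bilinear_on_scale_right subspace_add)
  also have "\<dots> = 0" using t Gnu by (simp add: power2_eq_square algebra_simps)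
  finally have "w \<in> L" using maximal_isotropic_absorbs[OF F bl L max wF wperp] by blast
  then have "G w n = 0" using nperp by blast
  moreover have "G w n = G u n + t * G n n"
    unfolding w_def using bl u nF tnF by (simp add: sym_bilinear_on_add_left sym_bilinear_on_scale_left)
  ultimately have "G u n = - t * G n n" by simp
  then have "G u u = t^2 * G n n" using t by (simp add: power2_eq_square algebra_simps)
  moreover have "t^2 * G n n \<le> 0" using gnn by (simp add: mult_nonneg_nonpos)
  ultimately show False using u(3) by simp
qed

lemma maximal_isotropic_orthogonal:
  fixes G :: "'v::euclidean_space \<Rightarrow> 'v \<Rightarrow> real"
  assumes F: "subspace F" and bl: "sym_bilinear_on F G"
    and P: "subspace P" "P \<subseteq> F" and N: "subspace N" "N \<subseteq> F"
    and FPN: "F = {p + n |p n. p \<in> P \<and> n \<in> N}"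
    and posP: "\<forall>p\<in>P. p \<noteq> 0 \<longrightarrow> G p p > 0"
    and negN: "\<forall>n\<in>N. n \<noteq> 0 \<longrightarrow> G n n < 0" and dimPN: "dim P = dim N"
    and L: "subspace L" "L \<subseteq> F" "\<forall>a\<in>L. \<forall>b\<in>L. G a b = 0"
    and max: "\<forall>W. subspace W \<and> L \<subseteq> W \<and> W \<subseteq> F \<and> (\<forall>a\<in>W. \<forall>b\<in>W. G a b = 0) \<longrightarrow> W = L"
    and u: "u \<in> F" "\<forall>l\<in>L. G l u = 0"
  shows "u \<in> L"
proof (rule ccontr)
  assume "u \<notin> L"
  then have "G u u \<noteq> 0" using maximal_isotropic_absorbs[OF F bl L max u] by blast
  then consider "G u u > 0" | "G u u < 0" by linarith
  then show False
  proof cases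
    case 1
    then show False
      using maximal_isotropic_no_positive_orthogonal[OF F bl P(1) N FPN negN dimPN L max u] by blast
  next
    case 2 \<comment> \<open>apply the positive case to the form -G, exchanging P and N\<close>
    have FNP: "F = {p + n |p n. p \<in> N \<and> n \<in> P}" using FPN by (auto simp: add.commute) (metis add.commute)+
    show False
      using maximal_isotropic_no_positive_orthogonal[OF F sym_bilinear_on_neg[OF bl] N(1) P FNP _
          dimPN[symmetric], of L u] posP L max u 2 by auto
  qed
qed

subsection \<open>Consequences of the Courant algebroid axioms\<close>

lemma FibI: "s \<in> Sec \<Longrightarrow> s x \<in> Fib Sec x"
  unfolding Fib_def by blast

lemma courant_algebroidD:
  assumes "courant_algebroid Fn Sec g rho br Dop"
  shows "function_algebra Fn" and "section_module Fn Sec" and "fibre_metric Fn Sec g"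
    and "\<forall>\<phi>\<in>Sec. \<forall>c. rho \<phi> (fconst c) = fconst 0"
    and "\<forall>\<phi>\<in>Sec. \<forall>\<psi>\<in>Sec. br \<phi> \<psi> \<in> Sec"
    and "\<forall>\<phi>\<in>Sec. \<forall>\<psi>\<in>Sec. \<forall>\<theta>\<in>Sec.
        br (sadd \<phi> \<psi>) \<theta> = sadd (br \<phi> \<theta>) (br \<psi> \<theta>) \<and>
        br \<theta> (sadd \<phi> \<psi>) = sadd (br \<theta> \<phi>) (br \<theta> \<psi>)"
    and "\<forall>f\<in>Fn. Dop f \<in> Sec \<and> (\<forall>\<phi>\<in>Sec. pr g (Dop f) \<phi> = rho \<phi> f)"
proof -
  note ax = assms[unfolded courant_algebroid_def]
  show "function_algebra Fn" using ax by (elim conjE)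
  show "section_module Fn Sec" using ax by (elim conjE)
  show "fibre_metric Fn Sec g" using ax by (elim conjE)
  show "\<forall>\<phi>\<in>Sec. \<forall>c. rho \<phi> (fconst c) = fconst 0" using ax by (elim conjE)
  show "\<forall>\<phi>\<in>Sec. \<forall>\<psi>\<in>Sec. br \<phi> \<psi> \<in> Sec" using ax by (elim conjE)
  show "\<forall>\<phi>\<in>Sec. \<forall>\<psi>\<in>Sec. \<forall>\<theta>\<in>Sec.
        br (sadd \<phi> \<psi>) \<theta> = sadd (br \<phi> \<theta>) (br \<psi> \<theta>) \<and>
        br \<theta> (sadd \<phi> \<psi>) = sadd (br \<theta> \<phi>) (br \<theta> \<psi>)" using ax by (elim conjE)
  show "\<forall>f\<in>Fn. Dop f \<in> Sec \<and> (\<forall>\<phi>\<in>Sec. pr g (Dop f) \<phi> = rho \<phi> f)" using ax by (elim conjE)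
qed

lemma courant_fibre_bilinear:
  "courant_algebroid Fn Sec g rho br Dop \<Longrightarrow> sym_bilinear_on (Fib Sec x) (g x)"
  using courant_algebroidD(3) unfolding fibre_metric_def sym_bilinear_on_def by blast

lemma courant_zero_section: "courant_algebroid Fn Sec g rho br Dop \<Longrightarrow> szero \<in> Sec"
  using courant_algebroidD(2) unfolding section_module_def by blast

lemma courant_zero_in_fibre: "courant_algebroid Fn Sec g rho br Dop \<Longrightarrow> 0 \<in> Fib Sec x"
  using FibI[OF courant_zero_section, of Fn Sec g rho br Dop x] by (simp add: szero_def)

lemma courant_pairing_zero_left:
  "courant_algebroid Fn Sec g rho br Dop \<Longrightarrow> v \<in> Fib Sec x \<Longrightarrow> g x 0 v = 0"
  using sym_bilinear_on_zero_left[OF courant_fibre_bilinear courant_zero_in_fibre] .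

lemma courant_pairing_zero_right:
  "courant_algebroid Fn Sec g rho br Dop \<Longrightarrow> v \<in> Fib Sec x \<Longrightarrow> g x v 0 = 0"
  using sym_bilinear_on_zero_right[OF courant_fibre_bilinear courant_zero_in_fibre] .

lemma courant_nondegenerate:
  assumes ca: "courant_algebroid Fn Sec g rho br Dop"
    and u: "u \<in> Fib Sec x" and perp: "\<forall>\<phi>\<in>Sec. g x (\<phi> x) u = 0"
  shows "u = 0"
proof -
  have "\<forall>v\<in>Fib Sec x. g x u v = 0"
  proof
    fix v assume v: "v \<in> Fib Sec x"
    then obtain \<phi> where "\<phi> \<in> Sec" "v = \<phi> x" unfolding Fib_def by blast
    then show "g x u v = 0" using perp sym_bilinear_on_sym[OF courant_fibre_bilinear[OF ca] v u] by simp
  qed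
  then show ?thesis using courant_algebroidD(3)[OF ca] u unfolding fibre_metric_def by blast
qed

text \<open>D kills constants: its pairing with every section is rho(phi) of a constant, i.e. zero.\<close>
lemma courant_D_const_zero:
  assumes ca: "courant_algebroid Fn Sec g rho br Dop"
  shows "Dop (fconst 0) = szero"
proof
  fix x
  have "fconst 0 \<in> Fn" using courant_algebroidD(1)[OF ca] unfolding function_algebra_def by blast
  then have D: "Dop (fconst 0) \<in> Sec" "\<forall>\<phi>\<in>Sec. pr g (Dop (fconst 0)) \<phi> = rho \<phi> (fconst 0)"
    using courant_algebroidD(7)[OF ca] by blast+
  have rho0: "\<forall>\<phi>\<in>Sec. rho \<phi> (fconst 0) = fconst 0"
    using courant_algebroidD(4)[OF ca] by blast
  have "\<forall>\<phi>\<in>Sec. g x (\<phi> x) (Dop (fconst 0) x) = 0"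
  proof
    fix \<phi> assume p: "\<phi> \<in> Sec"
    have "g x (Dop (fconst 0) x) (\<phi> x) = 0" using D(2) rho0 p
      unfolding pr_def fconst_def by metis
    then show "g x (\<phi> x) (Dop (fconst 0) x) = 0"
      using sym_bilinear_on_sym[OF courant_fibre_bilinear[OF ca] FibI[OF D(1)] FibI[OF p]] by simp
  qed
  then show "Dop (fconst 0) x = szero x"
    using courant_nondegenerate[OF ca FibI[OF D(1)]] by (simp add: szero_def)
qed

text \<open>A section equal to its own double is zero; this is how additivity of the bracket and of
  the connections shows that they vanish on the zero section.\<close>
lemma sadd_idempotent_zero: "s = sadd s s \<Longrightarrow> s = (szero :: 'm \<Rightarrow> 'v::real_vector)"
  unfolding sadd_def szero_def by (metis add_cancel_left_right)

lemma sadd_szero: "sadd szero szero = (szero :: 'm \<Rightarrow> 'v::real_vector)"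
  unfolding sadd_def szero_def by simp

lemma courant_bracket_zero:
  assumes ca: "courant_algebroid Fn Sec g rho br Dop" and t: "\<theta> \<in> Sec"
  shows "br \<theta> szero = szero" "br szero \<theta> = szero"
proof -
  have z: "szero \<in> Sec" using courant_zero_section[OF ca] .
  have "br \<theta> (sadd szero szero) = sadd (br \<theta> szero) (br \<theta> szero)"
    "br (sadd szero szero) \<theta> = sadd (br szero \<theta>) (br szero \<theta>)"
    using courant_algebroidD(6)[OF ca] z t by blast+
  then show "br \<theta> szero = szero" "br szero \<theta> = szero"
    by (simp_all add: sadd_szero sadd_idempotent_zero)
qed

lemma metric_connection_section:
  "metric_connection Fn Sec1 rho1 Dop1 Sec2 g2 nab \<Longrightarrow> a \<in> Sec1 \<Longrightarrow> \<alpha> \<in> Sec2 \<Longrightarrow> nab a \<alpha> \<in> Sec2"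
  unfolding metric_connection_def by blast

lemma metric_connection_zero:
  assumes mc: "metric_connection Fn Sec1 rho1 Dop1 Sec2 g2 nab"
    and a: "a \<in> Sec1" and z: "szero \<in> Sec2"
  shows "nab a szero = szero"
proof -
  have "nab a (sadd szero szero) = sadd (nab a szero) (nab a szero)"
    using mc a z unfolding metric_connection_def by blast
  then show ?thesis by (simp add: sadd_szero sadd_idempotent_zero)
qed

lemma curv_form_section: "curv_form Sec1 g1 Sec2 g2 nab Om \<Longrightarrow> a \<in> Sec1 \<Longrightarrow> b \<in> Sec1 \<Longrightarrow> Om a b \<in> Sec2"
  unfolding curv_form_def by blast

lemma curv_form_pairing:
  "curv_form Sec1 g1 Sec2 g2 nab Om \<Longrightarrow> a \<in> Sec1 \<Longrightarrow> b \<in> Sec1 \<Longrightarrow> \<gamma> \<in> Sec2 \<Longrightarrow>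
   g2 x (\<gamma> x) (Om a b x) = (1/2) * (g1 x (nab \<gamma> a x) (b x) - g1 x (a x) (nab \<gamma> b x))"
  unfolding curv_form_def pr_def by metis

lemma curv_form_zero:
  assumes cf: "curv_form Sec1 g1 Sec2 g2 nab Om"
    and ca1: "courant_algebroid Fn Sec1 g1 rho1 br1 Dop1"
    and ca2: "courant_algebroid Fn Sec2 g2 rho2 br2 Dop2"
    and mc: "metric_connection Fn Sec2 rho2 Dop2 Sec1 g1 nab"
    and a: "a \<in> Sec1"
  shows "Om a szero = szero" "Om szero a = szero"
proof -
  have z1: "szero \<in> Sec1" using courant_zero_section[OF ca1] .
  have pair0: "g2 x (\<gamma> x) (Om a szero x) = 0" "g2 x (\<gamma> x) (Om szero a x) = 0"
    if g: "\<gamma> \<in> Sec2" for \<gamma> x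
    using curv_form_pairing[OF cf a z1 g, of x] curv_form_pairing[OF cf z1 a g, of x]
      metric_connection_zero[OF mc g z1] FibI[OF metric_connection_section[OF mc g a]]
      courant_pairing_zero_left[OF ca1] courant_pairing_zero_right[OF ca1] FibI[OF a]
    by (simp_all add: szero_def)
  show "Om a szero = szero" "Om szero a = szero"
    using courant_nondegenerate[OF ca2 FibI[OF curv_form_section[OF cf a z1]]] pair0(1)
      courant_nondegenerate[OF ca2 FibI[OF curv_form_section[OF cf z1 a]]] pair0(2)
    by (auto simp: szero_def)
qed

subsection \<open>Lagrangian subbundles and Dirac structures\<close>

definition lagrangian_subbundle ::
  "('m \<Rightarrow> 'v::euclidean_space) set \<Rightarrow> ('m \<Rightarrow> 'v \<Rightarrow> 'v \<Rightarrow> real) \<Rightarrow> ('m \<Rightarrow> 'v set) \<Rightarrow> bool" where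
  "lagrangian_subbundle Sec g D \<longleftrightarrow>
     (\<forall>x. subspace (D x) \<and> D x \<subseteq> Fib Sec x) \<and>
     (\<forall>x. \<forall>v\<in>D x. \<exists>s\<in>Gam Sec D. s x = v) \<and>
     (\<forall>x. isotropic_at g x (D x) \<and>
          (\<forall>W. subspace W \<and> D x \<subseteq> W \<and> W \<subseteq> Fib Sec x \<and> isotropic_at g x W \<longrightarrow> W = D x))"

lemma dirac_structure_iff:
  "dirac_structure Sec g br D \<longleftrightarrow>
     lagrangian_subbundle Sec g D \<and> (\<forall>s\<in>Gam Sec D. \<forall>t\<in>Gam Sec D. br s t \<in> Gam Sec D)"
  unfolding dirac_structure_def lagrangian_subbundle_def by (simp only: conj_assoc)

lemma lagrangian_subspace: "lagrangian_subbundle Sec g D \<Longrightarrow> subspace (D x)"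
  unfolding lagrangian_subbundle_def by blast

lemma lagrangian_in_fibre: "lagrangian_subbundle Sec g D \<Longrightarrow> D x \<subseteq> Fib Sec x"
  unfolding lagrangian_subbundle_def by blast

lemma lagrangian_spanned: "lagrangian_subbundle Sec g D \<Longrightarrow> d \<in> D x \<Longrightarrow> \<exists>s\<in>Gam Sec D. s x = d"
  unfolding lagrangian_subbundle_def by blast

lemma lagrangian_isotropic: "lagrangian_subbundle Sec g D \<Longrightarrow> d \<in> D x \<Longrightarrow> e \<in> D x \<Longrightarrow> g x d e = 0"
  unfolding lagrangian_subbundle_def isotropic_at_def by blast

lemma Gam_section: "s \<in> Gam Sec D \<Longrightarrow> s \<in> Sec"
  unfolding Gam_def by blast

lemma Gam_value: "s \<in> Gam Sec D \<Longrightarrow> s x \<in> D x"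
  unfolding Gam_def by blast

lemma split_signature_fibre_subspace:
  assumes "split_signature Sec g"
  shows "subspace (Fib Sec x)"
proof -
  obtain P N where "subspace P" "subspace N" "Fib Sec x = {p + n | p n. p \<in> P \<and> n \<in> N}"
    using assms unfolding split_signature_def by blast
  then show ?thesis using subspace_sums by simp
qed

lemma lagrangian_orthogonal_mem:
  assumes ca: "courant_algebroid Fn Sec g rho br Dop" and ss: "split_signature Sec g"
    and D: "lagrangian_subbundle Sec g D"
    and u: "u \<in> Fib Sec x" "\<forall>d\<in>D x. g x d u = 0"
  shows "u \<in> D x"
proof -
  obtain P N where PN: "subspace P" "subspace N" "P \<subseteq> Fib Sec x" "N \<subseteq> Fib Sec x"
        "Fib Sec x = {p + n | p n. p \<in> P \<and> n \<in> N}"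
        "\<forall>p\<in>P. p \<noteq> 0 \<longrightarrow> g x p p > 0"
        "\<forall>n\<in>N. n \<noteq> 0 \<longrightarrow> g x n n < 0" "dim P = dim N"
    using ss[unfolded split_signature_def, rule_format, of x] by (elim exE conjE) blast
  have L: "subspace (D x)" "D x \<subseteq> Fib Sec x" "\<forall>a\<in>D x. \<forall>b\<in>D x. g x a b = 0"
    and max: "\<forall>W. subspace W \<and> D x \<subseteq> W \<and> W \<subseteq> Fib Sec x \<and> (\<forall>a\<in>W. \<forall>b\<in>W. g x a b = 0) \<longrightarrow> W = D x"
    using D unfolding lagrangian_subbundle_def isotropic_at_def by simp_all
  show ?thesis
    using maximal_isotropic_orthogonal[OF split_signature_fibre_subspace[OF ss]
        courant_fibre_bilinear[OF ca] PN(1,3,2,4,5,6,7,8) L max u] .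
qed

subsection \<open>The matched sum\<close>

lemma matched_pairD:
  assumes "matched_pair Fn Sec1 g1 rho1 br1 Dop1 Sec2 g2 rho2 br2 Dop2 nabR nabL Om Mh"
  shows "courant_algebroid Fn Sec1 g1 rho1 br1 Dop1"
    and "courant_algebroid Fn Sec2 g2 rho2 br2 Dop2"
    and "metric_connection Fn Sec1 rho1 Dop1 Sec2 g2 nabR"
    and "metric_connection Fn Sec2 rho2 Dop2 Sec1 g1 nabL"
    and "curv_form Sec1 g1 Sec2 g2 nabL Om"
    and "curv_form Sec2 g2 Sec1 g1 nabR Mh"
    and "courant_algebroid Fn (msum_sec Sec1 Sec2) (msum_g g1 g2) (msum_rho rho1 rho2)
          (msum_br g1 br1 Dop1 g2 br2 Dop2 nabR nabL Om Mh) (msum_D Dop1 Dop2)"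
  using assms unfolding matched_pair_def by simp_all

definition spair :: "('m \<Rightarrow> 'v) \<Rightarrow> ('m \<Rightarrow> 'w) \<Rightarrow> 'm \<Rightarrow> 'v \<times> 'w" where
  "spair a \<alpha> = (\<lambda>x. (a x, \<alpha> x))"

lemma sfst_spair [simp]: "sfst (spair a \<alpha>) = a" unfolding sfst_def spair_def by simp
lemma ssnd_spair [simp]: "ssnd (spair a \<alpha>) = \<alpha>" unfolding ssnd_def spair_def by simp

lemma Gam_msum_iff:
  "s \<in> Gam (msum_sec Sec1 Sec2) (\<lambda>x. D1 x \<times> D2 x) \<longleftrightarrow> sfst s \<in> Gam Sec1 D1 \<and> ssnd s \<in> Gam Sec2 D2"
  unfolding Gam_def msum_sec_def sfst_def ssnd_def by (auto simp: mem_Times_iff)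

lemma Gam_spair_iff:
  "spair a \<alpha> \<in> Gam (msum_sec Sec1 Sec2) (\<lambda>x. D1 x \<times> D2 x) \<longleftrightarrow> a \<in> Gam Sec1 D1 \<and> \<alpha> \<in> Gam Sec2 D2"
  unfolding Gam_msum_iff by simp

lemma msum_br_apply:
  "msum_br g1 br1 Dop1 g2 br2 Dop2 nabR nabL Om Mh s t x =
     (br1 (sfst s) (sfst t) x + nabL (ssnd s) (sfst t) x - nabL (ssnd t) (sfst s) x
        + Mh (ssnd s) (ssnd t) x + (1/2) *\<^sub>R Dop1 (pr g2 (ssnd s) (ssnd t)) x,
      br2 (ssnd s) (ssnd t) x + nabR (sfst s) (ssnd t) x - nabR (sfst t) (ssnd s) x
        + Om (sfst s) (sfst t) x + (1/2) *\<^sub>R Dop2 (pr g1 (sfst s) (sfst t)) x)"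
  unfolding msum_br_def Let_def by simp

lemma msum_br_mixed:
  assumes mp: "matched_pair Fn Sec1 g1 rho1 br1 Dop1 Sec2 g2 rho2 br2 Dop2 nabR nabL Om Mh"
    and a: "a \<in> Sec1" and \<alpha>: "\<alpha> \<in> Sec2"
  shows "msum_br g1 br1 Dop1 g2 br2 Dop2 nabR nabL Om Mh (spair a szero) (spair szero \<alpha>)
         = spair (\<lambda>x. - nabL \<alpha> a x) (nabR a \<alpha>)"
proof -
  note ca1 = matched_pairD(1)[OF mp] and ca2 = matched_pairD(2)[OF mp]
  note mcR = matched_pairD(3)[OF mp] and mcL = matched_pairD(4)[OF mp]
  have z1: "szero \<in> Sec1" and z2: "szero \<in> Sec2" using courant_zero_section ca1 ca2 by blast+
  have "pr g2 szero \<alpha> = fconst 0" "pr g1 a szero = fconst 0"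
    unfolding pr_def fconst_def szero_def
    using courant_pairing_zero_left[OF ca2 FibI[OF \<alpha>]] courant_pairing_zero_right[OF ca1 FibI[OF a]]
    by simp_all
  then show ?thesis
    unfolding msum_br_apply[abs_def] sfst_spair ssnd_spair
    using courant_bracket_zero[OF ca1 a] courant_bracket_zero[OF ca2 \<alpha>]
      metric_connection_zero[OF mcL z2 z1] metric_connection_zero[OF mcR z1 z2]
      curv_form_zero(2)[OF matched_pairD(6)[OF mp] ca2 ca1 mcR \<alpha>]
      curv_form_zero(1)[OF matched_pairD(5)[OF mp] ca1 ca2 mcL a]
      courant_D_const_zero[OF ca1] courant_D_const_zero[OF ca2]
    by (simp add: szero_def spair_def)
qed

text \<open>The product of two Lagrangian subbundles is a Lagrangian subbundle of the sum; for
  maximality, a vector of an isotropic W containing D1 x D2 is orthogonal to D1 (+) 0 and to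
  0 (+) D2, hence each component lies in the corresponding D.\<close>
lemma lagrangian_product_maximal:
  assumes ca1: "courant_algebroid Fn Sec1 g1 rho1 br1 Dop1"
    and ca2: "courant_algebroid Fn Sec2 g2 rho2 br2 Dop2"
    and ss1: "split_signature Sec1 g1" and ss2: "split_signature Sec2 g2"
    and D1: "lagrangian_subbundle Sec1 g1 D1" and D2: "lagrangian_subbundle Sec2 g2 D2"
    and W: "D1 x \<times> D2 x \<subseteq> W" "W \<subseteq> Fib (msum_sec Sec1 Sec2) x" "isotropic_at (msum_g g1 g2) x W"
  shows "W \<subseteq> D1 x \<times> D2 x"
proof
  fix p assume pW: "p \<in> W"
  obtain u v where p: "p = (u, v)" by fastforce
  obtain s where s: "s \<in> msum_sec Sec1 Sec2" "s x = p" using W(2) pW unfolding Fib_def by blast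
  have uF: "u \<in> Fib Sec1 x" and vF: "v \<in> Fib Sec2 x"
    using FibI[of "sfst s" Sec1 x] FibI[of "ssnd s" Sec2 x] s p
    unfolding msum_sec_def sfst_def ssnd_def by auto
  have D10: "0 \<in> D1 x" and D20: "0 \<in> D2 x" using lagrangian_subspace[OF D1] lagrangian_subspace[OF D2]
    by (simp_all add: subspace_0)
  have "g1 x d u = 0" if d: "d \<in> D1 x" for d
  proof -
    have "msum_g g1 g2 x (d, 0) p = 0" using W pW d D20 unfolding isotropic_at_def by blast
    then show ?thesis using courant_pairing_zero_left[OF ca2 vF] unfolding msum_g_def p by simp
  qed
  moreover have "g2 x d v = 0" if d: "d \<in> D2 x" for d
  proof -
    have "msum_g g1 g2 x (0, d) p = 0" using W pW d D10 unfolding isotropic_at_def by blast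
    then show ?thesis using courant_pairing_zero_left[OF ca1 uF] unfolding msum_g_def p by simp
  qed
  ultimately show "p \<in> D1 x \<times> D2 x"
    using lagrangian_orthogonal_mem[OF ca1 ss1 D1 uF] lagrangian_orthogonal_mem[OF ca2 ss2 D2 vF] p
    by blast
qed

lemma lagrangian_product:
  assumes ca1: "courant_algebroid Fn Sec1 g1 rho1 br1 Dop1"
    and ca2: "courant_algebroid Fn Sec2 g2 rho2 br2 Dop2"
    and ss1: "split_signature Sec1 g1" and ss2: "split_signature Sec2 g2"
    and D1: "lagrangian_subbundle Sec1 g1 D1" and D2: "lagrangian_subbundle Sec2 g2 D2"
  shows "lagrangian_subbundle (msum_sec Sec1 Sec2) (msum_g g1 g2) (\<lambda>x. D1 x \<times> D2 x)"
  unfolding lagrangian_subbundle_def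
proof (intro conjI allI ballI impI)
  fix x
  show "subspace (D1 x \<times> D2 x)"
    using subspace_Times lagrangian_subspace[OF D1] lagrangian_subspace[OF D2] by blast
  show "D1 x \<times> D2 x \<subseteq> Fib (msum_sec Sec1 Sec2) x"
  proof
    fix p assume "p \<in> D1 x \<times> D2 x"
    then have "fst p \<in> Fib Sec1 x" "snd p \<in> Fib Sec2 x"
      using lagrangian_in_fibre[OF D1, of x] lagrangian_in_fibre[OF D2, of x] by auto
    then obtain a \<alpha> where a: "a \<in> Sec1" "fst p = a x" and \<alpha>: "\<alpha> \<in> Sec2" "snd p = \<alpha> x"
      unfolding Fib_def by blast
    have "spair a \<alpha> \<in> msum_sec Sec1 Sec2" using a \<alpha> by (simp add: msum_sec_def)
    moreover have "p = spair a \<alpha> x" using a \<alpha> by (simp add: spair_def prod_eq_iff)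
    ultimately show "p \<in> Fib (msum_sec Sec1 Sec2) x" unfolding Fib_def by blast
  qed
  show "isotropic_at (msum_g g1 g2) x (D1 x \<times> D2 x)"
    using lagrangian_isotropic[OF D1] lagrangian_isotropic[OF D2]
    unfolding isotropic_at_def msum_g_def by auto
  fix v assume v: "v \<in> D1 x \<times> D2 x"
  obtain a where a: "a \<in> Gam Sec1 D1" "a x = fst v"
    using lagrangian_spanned[OF D1, of "fst v" x] v by force
  obtain \<alpha> where \<alpha>: "\<alpha> \<in> Gam Sec2 D2" "\<alpha> x = snd v"
    using lagrangian_spanned[OF D2, of "snd v" x] v by force
  show "\<exists>s\<in>Gam (msum_sec Sec1 Sec2) (\<lambda>x. D1 x \<times> D2 x). s x = v"
    using a \<alpha> Gam_spair_iff[of a \<alpha>] by (intro bexI[of _ "spair a \<alpha>"]) (simp_all add: spair_def)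
next
  fix x W
  assume "subspace W \<and> D1 x \<times> D2 x \<subseteq> W \<and> W \<subseteq> Fib (msum_sec Sec1 Sec2) x \<and>
          isotropic_at (msum_g g1 g2) x W"
  then show "W = D1 x \<times> D2 x"
    using lagrangian_product_maximal[OF ca1 ca2 ss1 ss2 D1 D2, of x W] by blast
qed

text \<open>If the connections preserve D1 and D2, then Omega(a,b) lies in D2 for sections a, b of
  D1: its pairing with a section c of D2 is a combination of pairings of D1 with nab_c a and
  nab_c b, which vanish.  Stated for Omega; applied to Mho with the roles exchanged.\<close>
lemma curv_form_preserves:
  assumes cf: "curv_form Sec1 g1 Sec2 g2 nab Om"
    and ca2: "courant_algebroid Fn Sec2 g2 rho2 br2 Dop2" and ss2: "split_signature Sec2 g2"
    and D1: "lagrangian_subbundle Sec1 g1 D1" and D2: "lagrangian_subbundle Sec2 g2 D2"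
    and pres: "\<forall>c\<in>Gam Sec2 D2. \<forall>a\<in>Gam Sec1 D1. nab c a \<in> Gam Sec1 D1"
    and a: "a \<in> Gam Sec1 D1" and b: "b \<in> Gam Sec1 D1"
  shows "Om a b x \<in> D2 x"
proof -
  have ab: "a \<in> Sec1" "b \<in> Sec1" using Gam_section a b by blast+
  have "g2 x d (Om a b x) = 0" if d: "d \<in> D2 x" for d
  proof -
    obtain c where c: "c \<in> Gam Sec2 D2" "c x = d" using lagrangian_spanned[OF D2 d] by blast
    have cS: "c \<in> Sec2" using Gam_section[OF c(1)] .
    have "nab c a x \<in> D1 x" "nab c b x \<in> D1 x"
      using Gam_value[OF pres[rule_format, OF c(1) a]] Gam_value[OF pres[rule_format, OF c(1) b]] .
    then have "g1 x (nab c a x) (b x) = 0" "g1 x (a x) (nab c b x) = 0"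
      using lagrangian_isotropic[OF D1] Gam_value[OF a] Gam_value[OF b] by blast+
    then have "g2 x (c x) (Om a b x) = 0" using curv_form_pairing[OF cf ab cS, of x] by simp
    then show ?thesis using c(2) by simp
  qed
  then show ?thesis
    using lagrangian_orthogonal_mem[OF ca2 ss2 D2 FibI[OF curv_form_section[OF cf ab]]] by blast
qed

text \<open>Necessity: closedness of D1 (+) D2 under the bracket, applied to the mixed bracket.\<close>
lemma msum_closed_imp_preserved:
  assumes mp: "matched_pair Fn Sec1 g1 rho1 br1 Dop1 Sec2 g2 rho2 br2 Dop2 nabR nabL Om Mh"
    and D1: "lagrangian_subbundle Sec1 g1 D1" and D2: "lagrangian_subbundle Sec2 g2 D2"
    and closed: "\<forall>s\<in>Gam (msum_sec Sec1 Sec2) (\<lambda>x. D1 x \<times> D2 x).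
                 \<forall>t\<in>Gam (msum_sec Sec1 Sec2) (\<lambda>x. D1 x \<times> D2 x).
        msum_br g1 br1 Dop1 g2 br2 Dop2 nabR nabL Om Mh s t \<in> Gam (msum_sec Sec1 Sec2) (\<lambda>x. D1 x \<times> D2 x)"
    and \<alpha>: "\<alpha> \<in> Gam Sec2 D2" and a: "a \<in> Gam Sec1 D1"
  shows "nabL \<alpha> a \<in> Gam Sec1 D1 \<and> nabR a \<alpha> \<in> Gam Sec2 D2"
proof -
  have aS: "a \<in> Sec1" and \<alpha>S: "\<alpha> \<in> Sec2" using Gam_section a \<alpha> by blast+
  have "szero \<in> Gam Sec1 D1" "szero \<in> Gam Sec2 D2"
    using courant_zero_section[OF matched_pairD(1)[OF mp]] courant_zero_section[OF matched_pairD(2)[OF mp]]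
      lagrangian_subspace[OF D1] lagrangian_subspace[OF D2]
    unfolding Gam_def szero_def by (simp_all add: subspace_0)
  then have "spair a szero \<in> Gam (msum_sec Sec1 Sec2) (\<lambda>x. D1 x \<times> D2 x)"
    "spair szero \<alpha> \<in> Gam (msum_sec Sec1 Sec2) (\<lambda>x. D1 x \<times> D2 x)"
    unfolding Gam_spair_iff using a \<alpha> by blast+
  then have "msum_br g1 br1 Dop1 g2 br2 Dop2 nabR nabL Om Mh (spair a szero) (spair szero \<alpha>)
      \<in> Gam (msum_sec Sec1 Sec2) (\<lambda>x. D1 x \<times> D2 x)"
    using closed by blast
  then have neg: "(\<lambda>x. - nabL \<alpha> a x) \<in> Gam Sec1 D1" and R: "nabR a \<alpha> \<in> Gam Sec2 D2"
    unfolding msum_br_mixed[OF mp aS \<alpha>S] Gam_spair_iff by blast+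
  have "nabL \<alpha> a x \<in> D1 x" for x
    using subspace_neg[OF lagrangian_subspace[OF D1] Gam_value[OF neg, of x]] by simp
  then show ?thesis
    using R metric_connection_section[OF matched_pairD(4)[OF mp] \<alpha>S aS] unfolding Gam_def by blast
qed

text \<open>Sufficiency: every summand of the bracket of two sections of D1 (+) D2 lies in D1,
  resp. D2; the D-terms vanish since the pairings involved are identically zero.\<close>
lemma preserved_imp_msum_closed:
  assumes mp: "matched_pair Fn Sec1 g1 rho1 br1 Dop1 Sec2 g2 rho2 br2 Dop2 nabR nabL Om Mh"
    and ss1: "split_signature Sec1 g1" and ss2: "split_signature Sec2 g2"
    and ds1: "dirac_structure Sec1 g1 br1 D1" and ds2: "dirac_structure Sec2 g2 br2 D2"
    and presL: "\<forall>\<alpha>\<in>Gam Sec2 D2. \<forall>a\<in>Gam Sec1 D1. nabL \<alpha> a \<in> Gam Sec1 D1"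
    and presR: "\<forall>a\<in>Gam Sec1 D1. \<forall>\<alpha>\<in>Gam Sec2 D2. nabR a \<alpha> \<in> Gam Sec2 D2"
    and s: "s \<in> Gam (msum_sec Sec1 Sec2) (\<lambda>x. D1 x \<times> D2 x)"
    and t: "t \<in> Gam (msum_sec Sec1 Sec2) (\<lambda>x. D1 x \<times> D2 x)"
  shows "msum_br g1 br1 Dop1 g2 br2 Dop2 nabR nabL Om Mh s t \<in> Gam (msum_sec Sec1 Sec2) (\<lambda>x. D1 x \<times> D2 x)"
proof -
  note ca1 = matched_pairD(1)[OF mp] and ca2 = matched_pairD(2)[OF mp]
  have D1: "lagrangian_subbundle Sec1 g1 D1" and cl1: "\<forall>s\<in>Gam Sec1 D1. \<forall>t\<in>Gam Sec1 D1. br1 s t \<in> Gam Sec1 D1"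
    using ds1 unfolding dirac_structure_iff by blast+
  have D2: "lagrangian_subbundle Sec2 g2 D2" and cl2: "\<forall>s\<in>Gam Sec2 D2. \<forall>t\<in>Gam Sec2 D2. br2 s t \<in> Gam Sec2 D2"
    using ds2 unfolding dirac_structure_iff by blast+
  obtain a \<alpha> b \<beta> where ab: "a \<in> Gam Sec1 D1" "b \<in> Gam Sec1 D1" "\<alpha> \<in> Gam Sec2 D2" "\<beta> \<in> Gam Sec2 D2"
    and st: "sfst s = a" "ssnd s = \<alpha>" "sfst t = b" "ssnd t = \<beta>"
    using s t unfolding Gam_msum_iff by blast
  have "pr g2 \<alpha> \<beta> = fconst 0" "pr g1 a b = fconst 0"
    unfolding pr_def fconst_def
    using lagrangian_isotropic[OF D2 Gam_value[OF ab(3)] Gam_value[OF ab(4)]]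
      lagrangian_isotropic[OF D1 Gam_value[OF ab(1)] Gam_value[OF ab(2)]] by simp_all
  then have Dterms: "Dop1 (pr g2 \<alpha> \<beta>) x = 0" "Dop2 (pr g1 a b) x = 0" for x
    using courant_D_const_zero[OF ca1] courant_D_const_zero[OF ca2] by (simp_all add: szero_def)
  have in1: "br1 a b x + nabL \<alpha> b x - nabL \<beta> a x + Mh \<alpha> \<beta> x + (1/2) *\<^sub>R Dop1 (pr g2 \<alpha> \<beta>) x \<in> D1 x" for x
    using lagrangian_subspace[OF D1, of x] Dterms
      Gam_value[OF cl1[rule_format, OF ab(1,2)]]
      Gam_value[OF presL[rule_format, OF ab(3,2)]] Gam_value[OF presL[rule_format, OF ab(4,1)]]
      curv_form_preserves[OF matched_pairD(6)[OF mp] ca1 ss1 D2 D1 presR ab(3,4)]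
    by (simp add: subspace_add subspace_diff)
  have in2: "br2 \<alpha> \<beta> x + nabR a \<beta> x - nabR b \<alpha> x + Om a b x + (1/2) *\<^sub>R Dop2 (pr g1 a b) x \<in> D2 x" for x
    using lagrangian_subspace[OF D2, of x] Dterms
      Gam_value[OF cl2[rule_format, OF ab(3,4)]]
      Gam_value[OF presR[rule_format, OF ab(1,4)]] Gam_value[OF presR[rule_format, OF ab(2,3)]]
      curv_form_preserves[OF matched_pairD(5)[OF mp] ca2 ss2 D1 D2 presL ab(1,2)]
    by (simp add: subspace_add subspace_diff)
  have "msum_br g1 br1 Dop1 g2 br2 Dop2 nabR nabL Om Mh s t \<in> msum_sec Sec1 Sec2"
    using courant_algebroidD(5)[OF matched_pairD(7)[OF mp]] s t unfolding Gam_def by blast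
  then show ?thesis
    using in1 in2 unfolding Gam_def msum_br_apply st by simp
qed

theorem mainTheorem13:
  fixes Fn :: "('m \<Rightarrow> real) set"
    and Sec1 :: "('m \<Rightarrow> 'v::euclidean_space) set" and g1 :: "'m \<Rightarrow> 'v \<Rightarrow> 'v \<Rightarrow> real"
    and rho1 :: "('m \<Rightarrow> 'v) \<Rightarrow> ('m \<Rightarrow> real) \<Rightarrow> ('m \<Rightarrow> real)"
    and br1 :: "('m \<Rightarrow> 'v) \<Rightarrow> ('m \<Rightarrow> 'v) \<Rightarrow> ('m \<Rightarrow> 'v)"
    and Dop1 :: "('m \<Rightarrow> real) \<Rightarrow> ('m \<Rightarrow> 'v)"
    and Sec2 :: "('m \<Rightarrow> 'w::euclidean_space) set" and g2 :: "'m \<Rightarrow> 'w \<Rightarrow> 'w \<Rightarrow> real"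
    and rho2 :: "('m \<Rightarrow> 'w) \<Rightarrow> ('m \<Rightarrow> real) \<Rightarrow> ('m \<Rightarrow> real)"
    and br2 :: "('m \<Rightarrow> 'w) \<Rightarrow> ('m \<Rightarrow> 'w) \<Rightarrow> ('m \<Rightarrow> 'w)"
    and Dop2 :: "('m \<Rightarrow> real) \<Rightarrow> ('m \<Rightarrow> 'w)"
    and nabR :: "('m \<Rightarrow> 'v) \<Rightarrow> ('m \<Rightarrow> 'w) \<Rightarrow> ('m \<Rightarrow> 'w)"
    and nabL :: "('m \<Rightarrow> 'w) \<Rightarrow> ('m \<Rightarrow> 'v) \<Rightarrow> ('m \<Rightarrow> 'v)"
    and Om :: "('m \<Rightarrow> 'v) \<Rightarrow> ('m \<Rightarrow> 'v) \<Rightarrow> ('m \<Rightarrow> 'w)"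
    and Mh :: "('m \<Rightarrow> 'w) \<Rightarrow> ('m \<Rightarrow> 'w) \<Rightarrow> ('m \<Rightarrow> 'v)"
    and D1 :: "'m \<Rightarrow> 'v set" and D2 :: "'m \<Rightarrow> 'w set"
  assumes "matched_pair Fn Sec1 g1 rho1 br1 Dop1 Sec2 g2 rho2 br2 Dop2 nabR nabL Om Mh"
    and "split_signature Sec1 g1" and "split_signature Sec2 g2"
    and "dirac_structure Sec1 g1 br1 D1" and "dirac_structure Sec2 g2 br2 D2"
  shows "dirac_structure (msum_sec Sec1 Sec2) (msum_g g1 g2)
           (msum_br g1 br1 Dop1 g2 br2 Dop2 nabR nabL Om Mh) (\<lambda>x. D1 x \<times> D2 x)
         \<longleftrightarrow> (\<forall>\<alpha>\<in>Gam Sec2 D2. \<forall>a\<in>Gam Sec1 D1.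
                 nabL \<alpha> a \<in> Gam Sec1 D1 \<and> nabR a \<alpha> \<in> Gam Sec2 D2)"
proof -
  have D1: "lagrangian_subbundle Sec1 g1 D1" and D2: "lagrangian_subbundle Sec2 g2 D2"
    using assms(4,5) unfolding dirac_structure_iff by blast+
  have "lagrangian_subbundle (msum_sec Sec1 Sec2) (msum_g g1 g2) (\<lambda>x. D1 x \<times> D2 x)"
    using lagrangian_product[OF matched_pairD(1,2)[OF assms(1)] assms(2,3) D1 D2] .
  then show ?thesis
    unfolding dirac_structure_iff
    using msum_closed_imp_preserved[OF assms(1) D1 D2]
      preserved_imp_msum_closed[OF assms]
    by blast
qed

end
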